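(* Let $X\subseteq\bar{X}$ and $Y\subseteq\bar{Y}$ be convex closures of Boolean metric spaces $X,Y$ over a Boolean ring $B$. Every contractive map $f:X\to Y$ extends to a unique contractive map $\bar{f}:\bar{X}\to\bar{Y}$. Furthermore: (1) $\bar{f}$ is an immersion if and only if $f$ is an immersion, and if $f$ is an isometry then so is $\bar f$; (2) for contractive maps $f:X\to Y$ and $g:Y\to Z$, where $Z\subseteq \bar Z$ is a convex closure, $\overline{g\circ f}=\bar{g}\circ\bar{f}$. In particular, any two convex closures of $X$ are isometric via an isometry restricting to the identity on $X$.
   Context: $B$ is a Boolean ring ($a\vee b=a+b+ab$, $a\le b\iff ab=a$; $a_1\oplus\cdots\oplus a_n$ denotes a sum of pairwise disjoint elements). A Boolean metric space over $B$: set $X$ with $d:X\times X\to B$, $d(x,y)=0\iff x=y$, symmetric, $d(x,z)\le d(x,y)\vee d(y,z)$. For $x_1,\dots,x_n\in X$, $a_i\in B$ with $a_1\oplus\cdots\oplus a_n=1$, $x$ is a convex combination of the $x_i$ with coefficients $a_i$ if $a_id(x,x_i)=0$ for all $i$; $X$ is convex if all such combinations exist. A convex closure of $X$ is a convex metric space $\bar X\supseteq X$ whose metric restricts to that of $X$ and in which every element is a convex combination of elements of $X$. A map $f$ is contractive if $d(f(x),f(y))\le d(x,y)$, an immersion if equality holds, and an isometry if it is a bijective immersion. *)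

theory Defs
  imports Main
begin

definition boolean_ring :: "'b::comm_ring_1 itself \<Rightarrow> bool" where
  "boolean_ring _ \<longleftrightarrow> (\<forall>x::'b. x * x = x)"

definition bjoin :: "'b::comm_ring_1 \<Rightarrow> 'b \<Rightarrow> 'b" where
  "bjoin a b = a + b + a * b"

definition ble :: "'b::comm_ring_1 \<Rightarrow> 'b \<Rightarrow> bool" where
  "ble a b \<longleftrightarrow> a * b = a"

definition bool_metric :: "'a set \<Rightarrow> ('a \<Rightarrow> 'a \<Rightarrow> 'b::comm_ring_1) \<Rightarrow> bool" where
  "bool_metric S d \<longleftrightarrow>
     (\<forall>x\<in>S. \<forall>y\<in>S. d x y = 0 \<longleftrightarrow> x = y) \<and>
     (\<forall>x\<in>S. \<forall>y\<in>S. d x y = d y x) \<and>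
     (\<forall>x\<in>S. \<forall>y\<in>S. \<forall>z\<in>S. ble (d x z) (bjoin (d x y) (d y z)))"

definition partition_one :: "nat \<Rightarrow> (nat \<Rightarrow> 'b::comm_ring_1) \<Rightarrow> bool" where
  "partition_one n a \<longleftrightarrow>
     (\<forall>i<n. \<forall>j<n. i \<noteq> j \<longrightarrow> a i * a j = 0) \<and> (\<Sum>i<n. a i) = 1"

definition convex_comb ::
  "('a \<Rightarrow> 'a \<Rightarrow> 'b::comm_ring_1) \<Rightarrow> 'a \<Rightarrow> nat \<Rightarrow> (nat \<Rightarrow> 'a) \<Rightarrow> (nat \<Rightarrow> 'b) \<Rightarrow> bool" where
  "convex_comb d x n xs a \<longleftrightarrow> (\<forall>i<n. a i * d x (xs i) = 0)"

definition bool_convex :: "'a set \<Rightarrow> ('a \<Rightarrow> 'a \<Rightarrow> 'b::comm_ring_1) \<Rightarrow> bool" where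
  "bool_convex S d \<longleftrightarrow>
     (\<forall>n xs a. (\<forall>i<n. xs i \<in> S) \<and> partition_one n a \<longrightarrow>
        (\<exists>x\<in>S. convex_comb d x n xs a))"

definition convex_closure ::
  "'a set \<Rightarrow> ('a \<Rightarrow> 'a \<Rightarrow> 'b::comm_ring_1) \<Rightarrow> 'a set \<Rightarrow> ('a \<Rightarrow> 'a \<Rightarrow> 'b) \<Rightarrow> bool" where
  "convex_closure X d Xb db \<longleftrightarrow>
     bool_metric X d \<and> X \<subseteq> Xb \<and> bool_metric Xb db \<and> bool_convex Xb db \<and>
     (\<forall>x\<in>X. \<forall>y\<in>X. db x y = d x y) \<and>
     (\<forall>x\<in>Xb. \<exists>n xs a. (\<forall>i<n. xs i \<in> X) \<and> partition_one n a \<and> convex_comb db x n xs a)"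

definition contractive ::
  "'a set \<Rightarrow> ('a \<Rightarrow> 'a \<Rightarrow> 'b::comm_ring_1) \<Rightarrow> 'c set \<Rightarrow> ('c \<Rightarrow> 'c \<Rightarrow> 'b) \<Rightarrow> ('a \<Rightarrow> 'c) \<Rightarrow> bool" where
  "contractive X dX Y dY f \<longleftrightarrow>
     (\<forall>x\<in>X. f x \<in> Y) \<and> (\<forall>x\<in>X. \<forall>y\<in>X. ble (dY (f x) (f y)) (dX x y))"

definition immersion ::
  "'a set \<Rightarrow> ('a \<Rightarrow> 'a \<Rightarrow> 'b::comm_ring_1) \<Rightarrow> 'c set \<Rightarrow> ('c \<Rightarrow> 'c \<Rightarrow> 'b) \<Rightarrow> ('a \<Rightarrow> 'c) \<Rightarrow> bool" where
  "immersion X dX Y dY f \<longleftrightarrow>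
     (\<forall>x\<in>X. f x \<in> Y) \<and> (\<forall>x\<in>X. \<forall>y\<in>X. dY (f x) (f y) = dX x y)"

definition isometry ::
  "'a set \<Rightarrow> ('a \<Rightarrow> 'a \<Rightarrow> 'b::comm_ring_1) \<Rightarrow> 'c set \<Rightarrow> ('c \<Rightarrow> 'c \<Rightarrow> 'b) \<Rightarrow> ('a \<Rightarrow> 'c) \<Rightarrow> bool" where
  "isometry X dX Y dY f \<longleftrightarrow> immersion X dX Y dY f \<and> bij_betw f X Y"

definition contractive_ext ::
  "'a set \<Rightarrow> 'a set \<Rightarrow> ('a \<Rightarrow> 'a \<Rightarrow> 'b::comm_ring_1) \<Rightarrow> 'c set \<Rightarrow> ('c \<Rightarrow> 'c \<Rightarrow> 'b)
     \<Rightarrow> ('a \<Rightarrow> 'c) \<Rightarrow> ('a \<Rightarrow> 'c) \<Rightarrow> bool" where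
  "contractive_ext X Xb dXb Yb dYb f fb \<longleftrightarrow>
     contractive Xb dXb Yb dYb fb \<and> (\<forall>x\<in>X. fb x = f x)"

end

theory Submission
  imports Defs
begin

text \<open>
  Every point of a convex closure is a combination
  \<open>x = a\<^sub>1x\<^sub>1 \<oplus> \<dots> \<oplus> a\<^sub>nx\<^sub>n\<close>
  of points of \<open>X\<close>, i.e. \<open>a\<^sub>i\<close> annihilates \<open>d(x, x\<^sub>i)\<close>.
  By the triangle inequality, on the piece \<open>a\<^sub>ib\<^sub>j\<close> the distance of \<open>x\<close> to
  \<open>z = b\<^sub>1z\<^sub>1 \<oplus> \<dots> \<oplus> b\<^sub>kz\<^sub>k\<close>
  is \<open>d(x\<^sub>i, z\<^sub>j)\<close>, and the pieces \<open>a\<^sub>ib\<^sub>j\<close> add up to \<open>1\<close>: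
  distances in the closure are determined by distances in \<open>X\<close>.
  Hence a contractive extension must send \<open>x\<close> to
  \<open>a\<^sub>1f(x\<^sub>1) \<oplus> \<dots> \<oplus> a\<^sub>nf(x\<^sub>n)\<close>;
  this point does not depend on the chosen representation, and the resulting map is
  contractive, and an immersion if \<open>f\<close> is. Functoriality and the uniqueness of convex
  closures follow from uniqueness of extensions.
\<close>

lemma ble_trans: "ble p q \<Longrightarrow> ble q r \<Longrightarrow> ble p (r::'b::comm_ring_1)"
  unfolding ble_def by (metis mult.assoc)

lemma mult_ble_transfer:
  fixes c p q p' q' :: "'b::comm_ring_1"
  assumes "c * p = c * p'" "c * q = c * q'" "ble p' q'"
  shows "c * (p * q) = c * p"
proof -
  have "c * (p * q) = p' * (c * q')" using assms(1,2) by (metis mult.assoc mult.commute)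
  also have "\<dots> = c * (p' * q')" by (simp add: ac_simps)
  also have "\<dots> = c * p" using assms(1,3) by (simp add: ble_def)
  finally show ?thesis .
qed

lemma partition_one_cancel:
  assumes "partition_one n a" and "\<forall>i<n. a i * D = a i * E"
  shows "D = E"
proof -
  have "D = (\<Sum>i<n. a i * D)" using assms(1) by (simp add: partition_one_def flip: sum_distrib_right)
  also have "\<dots> = (\<Sum>i<n. a i * E)" using assms(2) by simp
  also have "\<dots> = E" using assms(1) by (simp add: partition_one_def flip: sum_distrib_right)
  finally show ?thesis .
qed

lemma partition_one_cancel2:
  assumes "partition_one n a" and "partition_one k b"
    and "\<forall>i<n. \<forall>j<k. a i * b j * D = a i * b j * E"
  shows "D = E"
proof (rule partition_one_cancel[OF assms(1)], intro allI impI)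
  fix i assume "i < n"
  with assms(3) have "\<forall>j<k. b j * (a i * D) = b j * (a i * E)" by (simp add: ac_simps)
  then show "a i * D = a i * E" by (rule partition_one_cancel[OF assms(2)])
qed

definition convex_rep ::
  "'a set \<Rightarrow> ('a \<Rightarrow> 'a \<Rightarrow> 'b::comm_ring_1) \<Rightarrow> 'a \<Rightarrow> nat \<Rightarrow> (nat \<Rightarrow> 'a) \<Rightarrow> (nat \<Rightarrow> 'b) \<Rightarrow> bool" where
  "convex_rep X d x n xs a \<longleftrightarrow>
     (\<forall>i<n. xs i \<in> X) \<and> partition_one n a \<and> convex_comb d x n xs a"

context
  fixes S :: "'a set" and d :: "'a \<Rightarrow> 'a \<Rightarrow> 'b::comm_ring_1"
  assumes metric: "bool_metric S d"
begin

lemma bool_metric_eq_0_iff: "x \<in> S \<Longrightarrow> y \<in> S \<Longrightarrow> d x y = 0 \<longleftrightarrow> x = y"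
  using metric unfolding bool_metric_def by blast

lemma bool_metric_self: "x \<in> S \<Longrightarrow> d x x = 0"
  using bool_metric_eq_0_iff by blast

lemma bool_metric_commute: "x \<in> S \<Longrightarrow> y \<in> S \<Longrightarrow> d x y = d y x"
  using metric unfolding bool_metric_def by blast

lemma bool_metric_triangle:
  "x \<in> S \<Longrightarrow> y \<in> S \<Longrightarrow> z \<in> S \<Longrightarrow> ble (d x z) (bjoin (d x y) (d y z))"
  using metric unfolding bool_metric_def by blast

lemma bool_metric_mult_le_replace_left:
  assumes "x \<in> S" "u \<in> S" "y \<in> S" and "c * d x u = 0"
  shows "ble (c * d x y) (d u y)"
proof -
  have tri: "d x y * (d x u + d u y + d x u * d u y) = d x y"
    using bool_metric_triangle[OF assms(1-3)] by (simp add: ble_def bjoin_def)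
  have "c * d x y = c * (d x y * (d x u + d u y + d x u * d u y))" by (simp only: tri)
  also have "\<dots> = (c * d x u) * (d x y + d x y * d u y) + c * d x y * d u y"
    by (simp add: algebra_simps)
  finally have "c * d x y = (c * d x u) * (d x y + d x y * d u y) + c * d x y * d u y" .
  with assms(4) show ?thesis by (simp add: ble_def)
qed

lemma bool_metric_mult_le_replace:
  assumes "x \<in> S" "x' \<in> S" "y \<in> S" "y' \<in> S" and "c * d x x' = 0" "c * d y y' = 0"
  shows "ble (c * d x y) (d x' y')"
proof -
  have le1: "c * d x y * d x' y = c * d x y"
    using bool_metric_mult_le_replace_left[OF assms(1,2,3,5)] by (simp add: ble_def)
  have "ble (c * d y x') (d y' x')" using bool_metric_mult_le_replace_left[OF assms(3,4,2,6)] .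
  then have le2: "c * d x' y * d x' y' = c * d x' y"
    using assms(1-4) by (simp add: ble_def bool_metric_commute)
  have "c * d x y * d x' y' = d x y * (c * d x' y * d x' y')"
    by (subst le1[symmetric]) (simp add: ac_simps)
  also have "\<dots> = c * d x y" using le1 le2 by (simp add: ac_simps)
  finally show ?thesis by (simp add: ble_def)
qed

lemma bool_metric_mult_eq_replace:
  assumes "x \<in> S" "x' \<in> S" "y \<in> S" "y' \<in> S" and "c * d x x' = 0" "c * d y y' = 0"
  shows "c * d x y = c * d x' y'"
proof -
  have "c * d x' x = 0" "c * d y' y = 0" using assms by (simp_all add: bool_metric_commute)
  then have "c * d x y * d x' y' = c * d x y" "c * d x' y' * d x y = c * d x' y'"
    using bool_metric_mult_le_replace assms unfolding ble_def by blast+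
  then show ?thesis by (simp add: ac_simps)
qed

lemma convex_rep_unique:
  assumes "X \<subseteq> S" "x \<in> S" "y \<in> S" "convex_rep X d x n xs a" "convex_rep X d y n xs a"
  shows "x = y"
proof -
  have "a i * d x y = a i * 0" if "i < n" for i
  proof -
    have "xs i \<in> S" "a i * d x (xs i) = 0" "a i * d y (xs i) = 0"
      using assms that unfolding convex_rep_def convex_comb_def by auto
    then have "a i * d x y = a i * d (xs i) (xs i)"
      using bool_metric_mult_eq_replace assms(2,3) by blast
    with \<open>xs i \<in> S\<close> show ?thesis by (simp add: bool_metric_self)
  qed
  then have "d x y = 0"
    using assms(4) partition_one_cancel unfolding convex_rep_def by blast
  then show ?thesis using bool_metric_eq_0_iff assms(2,3) by blast
qed

lemma convex_rep_dist:
  assumes "X \<subseteq> S" "x \<in> S" "z \<in> S" "convex_rep X d x n xs a" "convex_rep X d z k zs b"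
    and "i < n" "j < k"
  shows "a i * b j * d x z = a i * b j * d (xs i) (zs j)"
proof (rule bool_metric_mult_eq_replace)
  show "xs i \<in> S" "zs j \<in> S" using assms unfolding convex_rep_def by auto
  have "a i * d x (xs i) = 0" "b j * d z (zs j) = 0"
    using assms unfolding convex_rep_def convex_comb_def by auto
  moreover have "a i * b j * d x (xs i) = b j * (a i * d x (xs i))"
    and "a i * b j * d z (zs j) = a i * (b j * d z (zs j))" by (simp_all only: ac_simps)
  ultimately show "a i * b j * d x (xs i) = 0" "a i * b j * d z (zs j) = 0" by simp_all
  show "x \<in> S" "z \<in> S" by (fact assms)+
qed

lemma convex_rep_point: "x \<in> S \<Longrightarrow> x \<in> X \<Longrightarrow> convex_rep X d x 1 (\<lambda>_. x) (\<lambda>_. 1)"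
  by (simp add: bool_metric_self convex_rep_def partition_one_def convex_comb_def)

end

lemma immersion_inj_on:
  assumes "bool_metric X dX" "bool_metric Y dY" "immersion X dX Y dY f"
  shows "inj_on f X"
proof (rule inj_onI)
  fix x z assume xz: "x \<in> X" "z \<in> X" and "f x = f z"
  have "dX x z = dY (f x) (f z)" "f z \<in> Y" using assms(3) xz unfolding immersion_def by auto
  with \<open>f x = f z\<close> have "dX x z = 0" using bool_metric_self[OF assms(2)] by simp
  then show "x = z" using bool_metric_eq_0_iff[OF assms(1)] \<open>x \<in> X\<close> \<open>z \<in> X\<close> by blast
qed

lemma convex_rep_exists:
  assumes "bool_convex S d" "X \<subseteq> S" "\<forall>i<n. xs i \<in> X" "partition_one n a"
  shows "\<exists>x\<in>S. convex_rep X d x n xs a"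
  using assms unfolding bool_convex_def convex_rep_def by blast

lemma convex_closure_subset: "convex_closure X d Xb db \<Longrightarrow> X \<subseteq> Xb"
  unfolding convex_closure_def by blast

lemma convex_closure_metric: "convex_closure X d Xb db \<Longrightarrow> bool_metric Xb db"
  unfolding convex_closure_def by blast

lemma convex_closure_convex: "convex_closure X d Xb db \<Longrightarrow> bool_convex Xb db"
  unfolding convex_closure_def by blast

lemma convex_closure_restrict:
  "convex_closure X d Xb db \<Longrightarrow> x \<in> X \<Longrightarrow> y \<in> X \<Longrightarrow> db x y = d x y"
  unfolding convex_closure_def by blast

lemma convex_closure_obtain_rep:
  assumes "convex_closure X d Xb db" "x \<in> Xb"
  obtains n xs a where "convex_rep X db x n xs a"
  using assms unfolding convex_closure_def convex_rep_def by blast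

lemma convex_closure_rep_dist:
  assumes c: "convex_closure X d Xb db" and "x \<in> Xb" "z \<in> Xb"
    and rx: "convex_rep X db x n xs a" and rz: "convex_rep X db z k zs b" and "i < n" "j < k"
  shows "a i * b j * db x z = a i * b j * d (xs i) (zs j)"
proof -
  have "xs i \<in> X" "zs j \<in> X" using rx rz assms(6,7) unfolding convex_rep_def by auto
  then show ?thesis
    using convex_rep_dist[OF convex_closure_metric[OF c] convex_closure_subset[OF c]] assms
    by (simp add: convex_closure_restrict[OF c])
qed

lemma contractive_ext_convex_rep:
  assumes ext: "contractive_ext X Xb dXb Yb dYb f fb" and "X \<subseteq> Xb" "f ` X \<subseteq> Y"
    and "x \<in> Xb" and rep: "convex_rep X dXb x n xs a"
  shows "convex_rep Y dYb (fb x) n (f \<circ> xs) a"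
proof -
  have "a i * dYb (fb x) (f (xs i)) = 0" if "i < n" for i
  proof -
    have "xs i \<in> X" "a i * dXb x (xs i) = 0"
      using rep that unfolding convex_rep_def convex_comb_def by auto
    moreover have "ble (dYb (fb x) (fb (xs i))) (dXb x (xs i))"
      using ext \<open>xs i \<in> X\<close> assms(2,4) unfolding contractive_ext_def contractive_def by blast
    ultimately show ?thesis
      using ext unfolding contractive_ext_def ble_def by (metis mult.left_commute mult_zero_right)
  qed
  then show ?thesis using rep assms(3) unfolding convex_rep_def convex_comb_def by auto
qed

lemma contractive_comp:
  assumes "contractive X dX Y dY f" "contractive Y dY Z dZ g"
  shows "contractive X dX Z dZ (g \<circ> f)"
  using assms ble_trans unfolding contractive_def comp_def by metis

lemma contractive_ext_comp:
  assumes "contractive_ext X Xb dXb Yb dYb f fb" "contractive_ext Y Yb dYb Zb dZb g gb"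
    and "f ` X \<subseteq> Y"
  shows "contractive_ext X Xb dXb Zb dZb (g \<circ> f) (gb \<circ> fb)"
  using assms contractive_comp unfolding contractive_ext_def by auto

lemma contractive_id:
  fixes d :: "'a \<Rightarrow> 'a \<Rightarrow> 'b::comm_ring_1"
  shows "boolean_ring TYPE('b) \<Longrightarrow> contractive X d X d id"
  unfolding contractive_def boolean_ring_def ble_def by simp

lemma isometry_id: "isometry X d X d id"
  unfolding isometry_def immersion_def by simp

context
  fixes X Xb :: "'a set" and dX dXb :: "'a \<Rightarrow> 'a \<Rightarrow> 'b::comm_ring_1"
    and Y Yb :: "'c set" and dY dYb :: "'c \<Rightarrow> 'c \<Rightarrow> 'b"
  assumes cX: "convex_closure X dX Xb dXb" and cY: "convex_closure Y dY Yb dYb"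
begin

lemma image_rep_dist_le:
  assumes f: "contractive X dX Y dY f" and "x \<in> Xb" "z \<in> Xb" "y \<in> Yb" "w \<in> Yb"
    and rx: "convex_rep X dXb x n xs a" and rz: "convex_rep X dXb z k zs b"
    and ry: "convex_rep Y dYb y n (f \<circ> xs) a" and rw: "convex_rep Y dYb w k (f \<circ> zs) b"
  shows "ble (dYb y w) (dXb x z)"
  unfolding ble_def
proof (rule partition_one_cancel2)
  show "partition_one n a" "partition_one k b" using rx rz unfolding convex_rep_def by auto
  show "\<forall>i<n. \<forall>j<k. a i * b j * (dYb y w * dXb x z) = a i * b j * dYb y w"
  proof (intro allI impI)
    fix i j assume "i < n" "j < k"
    then have "xs i \<in> X" "zs j \<in> X" using rx rz unfolding convex_rep_def by auto
    with f have "ble (dY (f (xs i)) (f (zs j))) (dX (xs i) (zs j))"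
      unfolding contractive_def by blast
    with \<open>i < n\<close> \<open>j < k\<close> show "a i * b j * (dYb y w * dXb x z) = a i * b j * dYb y w"
      using convex_closure_rep_dist[OF cY _ _ ry rw] convex_closure_rep_dist[OF cX _ _ rx rz]
        assms(2-5) by (intro mult_ble_transfer) auto
  qed
qed

lemma image_rep_dist_eq:
  assumes f: "immersion X dX Y dY f" and "x \<in> Xb" "z \<in> Xb" "y \<in> Yb" "w \<in> Yb"
    and rx: "convex_rep X dXb x n xs a" and rz: "convex_rep X dXb z k zs b"
    and ry: "convex_rep Y dYb y n (f \<circ> xs) a" and rw: "convex_rep Y dYb w k (f \<circ> zs) b"
  shows "dYb y w = dXb x z"
proof (rule partition_one_cancel2)
  show "partition_one n a" "partition_one k b" using rx rz unfolding convex_rep_def by auto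
  show "\<forall>i<n. \<forall>j<k. a i * b j * dYb y w = a i * b j * dXb x z"
  proof (intro allI impI)
    fix i j assume "i < n" "j < k"
    then have "xs i \<in> X" "zs j \<in> X" using rx rz unfolding convex_rep_def by auto
    with f have "dY (f (xs i)) (f (zs j)) = dX (xs i) (zs j)"
      unfolding immersion_def by blast
    with \<open>i < n\<close> \<open>j < k\<close> show "a i * b j * dYb y w = a i * b j * dXb x z"
      using convex_closure_rep_dist[OF cY _ _ ry rw] convex_closure_rep_dist[OF cX _ _ rx rz]
        assms(2-5) by simp
  qed
qed

lemma image_rep_unique:
  assumes f: "contractive X dX Y dY f" and "x \<in> Xb" "y \<in> Yb" "w \<in> Yb"
    and rx: "convex_rep X dXb x n xs a" and rx': "convex_rep X dXb x k zs b"
    and ry: "convex_rep Y dYb y n (f \<circ> xs) a" and rw: "convex_rep Y dYb w k (f \<circ> zs) b"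
  shows "y = w"
proof -
  have "ble (dYb y w) (dXb x x)" using image_rep_dist_le[OF f] assms by blast
  moreover have "dXb x x = 0" using bool_metric_self[OF convex_closure_metric[OF cX]] assms(2) .
  ultimately have "dYb y w = 0" by (simp add: ble_def)
  then show ?thesis using bool_metric_eq_0_iff[OF convex_closure_metric[OF cY]] assms(3,4) by blast
qed

lemma contractive_ext_unique:
  assumes f: "contractive X dX Y dY f"
    and ext1: "contractive_ext X Xb dXb Yb dYb f fb1"
    and ext2: "contractive_ext X Xb dXb Yb dYb f fb2" and "x \<in> Xb"
  shows "fb1 x = fb2 x"
proof -
  obtain n xs a where rx: "convex_rep X dXb x n xs a"
    using convex_closure_obtain_rep[OF cX \<open>x \<in> Xb\<close>] .
  have fY: "f ` X \<subseteq> Y" using f unfolding contractive_def by blast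
  note image_rep = contractive_ext_convex_rep[OF _ convex_closure_subset[OF cX] fY \<open>x \<in> Xb\<close> rx]
  have "fb1 x \<in> Yb" "fb2 x \<in> Yb"
    using ext1 ext2 \<open>x \<in> Xb\<close> unfolding contractive_ext_def contractive_def by blast+
  then show ?thesis
    by (rule image_rep_unique[OF f \<open>x \<in> Xb\<close> _ _ rx rx image_rep[OF ext1] image_rep[OF ext2]])
qed

lemma contractive_ext_exists:
  assumes f: "contractive X dX Y dY f"
  shows "\<exists>fb. contractive_ext X Xb dXb Yb dYb f fb"
proof -
  have fY: "f ` X \<subseteq> Y" using f unfolding contractive_def by blast
  define image_rep where "image_rep x y \<longleftrightarrow> y \<in> Yb \<and>
      (\<exists>n xs a. convex_rep X dXb x n xs a \<and> convex_rep Y dYb y n (f \<circ> xs) a)" for x y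
  \<comment> \<open>Which representation of \<open>x\<close> the choice picks is irrelevant, since
    \<open>image_rep_dist_le\<close> holds for arbitrary representations.\<close>
  define fb where "fb x = (SOME y. image_rep x y)" for x
  have fb: "image_rep x (fb x)" if x: "x \<in> Xb" for x
  proof -
    obtain n xs a where rx: "convex_rep X dXb x n xs a"
      using convex_closure_obtain_rep[OF cX x] .
    then have "\<forall>i<n. (f \<circ> xs) i \<in> Y" "partition_one n a"
      using fY unfolding convex_rep_def by auto
    then obtain y where "y \<in> Yb" "convex_rep Y dYb y n (f \<circ> xs) a"
      using convex_rep_exists[OF convex_closure_convex[OF cY] convex_closure_subset[OF cY]] by blast
    with rx have "image_rep x y" unfolding image_rep_def by blast
    then show ?thesis unfolding fb_def by (rule someI)
  qed
  have "ble (dYb (fb x) (fb z)) (dXb x z)" if xz: "x \<in> Xb" "z \<in> Xb" for x z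
  proof -
    obtain n xs a where
      "fb x \<in> Yb" "convex_rep X dXb x n xs a" "convex_rep Y dYb (fb x) n (f \<circ> xs) a"
      using fb[OF xz(1)] unfolding image_rep_def by blast
    moreover obtain k zs b where
      "fb z \<in> Yb" "convex_rep X dXb z k zs b" "convex_rep Y dYb (fb z) k (f \<circ> zs) b"
      using fb[OF xz(2)] unfolding image_rep_def by blast
    ultimately show ?thesis using image_rep_dist_le[OF f xz] by blast
  qed
  moreover have "fb x = f x" if x: "x \<in> X" for x
  proof -
    have "x \<in> Xb" "f x \<in> Y" "f x \<in> Yb"
      using x fY convex_closure_subset[OF cX] convex_closure_subset[OF cY] by auto
    obtain n xs a where
      "fb x \<in> Yb" "convex_rep X dXb x n xs a" "convex_rep Y dYb (fb x) n (f \<circ> xs) a"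
      using fb[OF \<open>x \<in> Xb\<close>] unfolding image_rep_def by blast
    moreover have "convex_rep X dXb x 1 (\<lambda>_. x) (\<lambda>_. 1)"
      using convex_rep_point[OF convex_closure_metric[OF cX] \<open>x \<in> Xb\<close> x] .
    moreover have "convex_rep Y dYb (f x) 1 (f \<circ> (\<lambda>_. x)) (\<lambda>_. 1)"
      using convex_rep_point[OF convex_closure_metric[OF cY] \<open>f x \<in> Yb\<close> \<open>f x \<in> Y\<close>]
      by (simp add: comp_def)
    ultimately show ?thesis using image_rep_unique[OF f \<open>x \<in> Xb\<close> _ \<open>f x \<in> Yb\<close>] by blast
  qed
  moreover have "fb x \<in> Yb" if "x \<in> Xb" for x using fb[OF that] unfolding image_rep_def by blast
  ultimately have "contractive_ext X Xb dXb Yb dYb f fb"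
    unfolding contractive_ext_def contractive_def by blast
  then show ?thesis by blast
qed

lemma contractive_ext_immersion_iff:
  assumes f: "contractive X dX Y dY f" and ext: "contractive_ext X Xb dXb Yb dYb f fb"
  shows "immersion Xb dXb Yb dYb fb \<longleftrightarrow> immersion X dX Y dY f"
proof
  have sub: "X \<subseteq> Xb" "Y \<subseteq> Yb" using convex_closure_subset cX cY by blast+
  have fY: "f ` X \<subseteq> Y" using f unfolding contractive_def by blast
  have fbf: "\<forall>x\<in>X. fb x = f x" using ext unfolding contractive_ext_def by blast
  {
    assume "immersion Xb dXb Yb dYb fb"
    then show "immersion X dX Y dY f"
      using fY fbf sub convex_closure_restrict[OF cX] convex_closure_restrict[OF cY]
      unfolding immersion_def by (metis image_subset_iff subsetD)
  }
  assume im: "immersion X dX Y dY f"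
  have "dYb (fb x) (fb z) = dXb x z" if xz: "x \<in> Xb" "z \<in> Xb" for x z
  proof -
    obtain n xs a where rx: "convex_rep X dXb x n xs a"
      using convex_closure_obtain_rep[OF cX xz(1)] .
    obtain k zs b where rz: "convex_rep X dXb z k zs b"
      using convex_closure_obtain_rep[OF cX xz(2)] .
    have "fb x \<in> Yb" "fb z \<in> Yb"
      using ext xz unfolding contractive_ext_def contractive_def by blast+
    then show ?thesis
      using image_rep_dist_eq[OF im xz _ _ rx rz] contractive_ext_convex_rep[OF ext sub(1) fY]
        xz rx rz by blast
  qed
  moreover have "fb x \<in> Yb" if "x \<in> Xb" for x
    using ext that unfolding contractive_ext_def contractive_def by blast
  ultimately show "immersion Xb dXb Yb dYb fb" unfolding immersion_def by blast
qed

lemma contractive_ext_isometry: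
  assumes f: "contractive X dX Y dY f" and ext: "contractive_ext X Xb dXb Yb dYb f fb"
    and iso: "isometry X dX Y dY f"
  shows "isometry Xb dXb Yb dYb fb"
proof -
  have sub: "X \<subseteq> Xb" "Y \<subseteq> Yb" using convex_closure_subset cX cY by blast+
  have im: "immersion Xb dXb Yb dYb fb"
    using contractive_ext_immersion_iff[OF f ext] iso unfolding isometry_def by blast
  have bij: "bij_betw f X Y" using iso unfolding isometry_def by blast
  have "inj_on fb Xb"
    using immersion_inj_on[OF convex_closure_metric[OF cX] convex_closure_metric[OF cY] im] .
  moreover have "y \<in> fb ` Xb" if y: "y \<in> Yb" for y
  proof -
    obtain n ys a where ry: "convex_rep Y dYb y n ys a"
      using convex_closure_obtain_rep[OF cY y] .
    define xs where "xs i = inv_into X f (ys i)" for i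
    have "\<forall>i<n. ys i \<in> Y" "partition_one n a" using ry unfolding convex_rep_def by auto
    then have "\<forall>i<n. xs i \<in> X" and fxs: "\<forall>i<n. f (xs i) = ys i"
      using bij unfolding xs_def bij_betw_def by (auto intro: inv_into_into f_inv_into_f)
    then obtain x where x: "x \<in> Xb" "convex_rep X dXb x n xs a"
      using convex_rep_exists[OF convex_closure_convex[OF cX] sub(1)] \<open>partition_one n a\<close> by blast
    have "convex_rep Y dYb (fb x) n (f \<circ> xs) a"
      using contractive_ext_convex_rep[OF ext sub(1)] bij x unfolding bij_betw_def by blast
    then have "convex_rep Y dYb (fb x) n ys a"
      using fxs unfolding convex_rep_def convex_comb_def by simp
    moreover have "fb x \<in> Yb" using im x unfolding immersion_def by blast
    ultimately have "fb x = y"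
      using convex_rep_unique[OF convex_closure_metric[OF cY] sub(2) _ y _ ry] by blast
    with x show ?thesis by blast
  qed
  moreover have "fb ` Xb \<subseteq> Yb" using im unfolding immersion_def by blast
  ultimately show ?thesis using im unfolding isometry_def bij_betw_def by blast
qed

end

lemma contractive_ext_comp_unique:
  assumes cX: "convex_closure X dX Xb dXb" and cY: "convex_closure Y dY Yb dYb"
    and cZ: "convex_closure Z dZ Zb dZb"
    and f: "contractive X dX Y dY f" and g: "contractive Y dY Z dZ g"
    and fb: "contractive_ext X Xb dXb Yb dYb f fb" and gb: "contractive_ext Y Yb dYb Zb dZb g gb"
    and gfb: "contractive_ext X Xb dXb Zb dZb (g \<circ> f) gfb" and "x \<in> Xb"
  shows "gfb x = gb (fb x)"
proof -
  have "f ` X \<subseteq> Y" using f unfolding contractive_def by blast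
  with fb gb have "contractive_ext X Xb dXb Zb dZb (g \<circ> f) (gb \<circ> fb)"
    by (rule contractive_ext_comp)
  then show ?thesis
    using contractive_ext_unique[OF cX cZ contractive_comp[OF f g] gfb] \<open>x \<in> Xb\<close> by simp
qed

lemma convex_closure_isometric:
  assumes B: "boolean_ring TYPE('b::comm_ring_1)"
    and cX: "convex_closure X (dX :: 'a \<Rightarrow> 'a \<Rightarrow> 'b) Xb dXb" and cX': "convex_closure X dX Xb' dXb'"
  shows "\<exists>h. isometry Xb dXb Xb' dXb' h \<and> (\<forall>x\<in>X. h x = x)"
proof -
  obtain h where h: "contractive_ext X Xb dXb Xb' dXb' id h"
    using contractive_ext_exists[OF cX cX' contractive_id[OF B]] by blast
  then have "isometry Xb dXb Xb' dXb' h"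
    using contractive_ext_isometry[OF cX cX' contractive_id[OF B] _ isometry_id] by blast
  moreover have "\<forall>x\<in>X. h x = x" using h unfolding contractive_ext_def by simp
  ultimately show ?thesis by blast
qed

theorem mainTheorem15:
  fixes dX :: "'a \<Rightarrow> 'a \<Rightarrow> 'b::comm_ring_1" and dXb :: "'a \<Rightarrow> 'a \<Rightarrow> 'b"
    and dY dYb :: "'c \<Rightarrow> 'c \<Rightarrow> 'b" and dZ dZb :: "'d \<Rightarrow> 'd \<Rightarrow> 'b"
    and X Xb :: "'a set" and Y Yb :: "'c set" and Z Zb :: "'d set"
  assumes B: "boolean_ring TYPE('b)"
    and cX: "convex_closure X dX Xb dXb"
    and cY: "convex_closure Y dY Yb dYb"
    and cZ: "convex_closure Z dZ Zb dZb"
  shows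
    "(\<forall>f. contractive X dX Y dY f \<longrightarrow>
        (\<exists>fb. contractive_ext X Xb dXb Yb dYb f fb) \<and>
        (\<forall>fb1 fb2. contractive_ext X Xb dXb Yb dYb f fb1 \<and> contractive_ext X Xb dXb Yb dYb f fb2
            \<longrightarrow> (\<forall>x\<in>Xb. fb1 x = fb2 x)))
     \<and> (\<forall>f fb. contractive X dX Y dY f \<and> contractive_ext X Xb dXb Yb dYb f fb \<longrightarrow>
          (immersion Xb dXb Yb dYb fb \<longleftrightarrow> immersion X dX Y dY f) \<and>
          (isometry X dX Y dY f \<longrightarrow> isometry Xb dXb Yb dYb fb))
     \<and> (\<forall>f g fb gb gfb. contractive X dX Y dY f \<and> contractive Y dY Z dZ g \<and>
          contractive_ext X Xb dXb Yb dYb f fb \<and> contractive_ext Y Yb dYb Zb dZb g gb \<and>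
          contractive_ext X Xb dXb Zb dZb (g \<circ> f) gfb \<longrightarrow>
          (\<forall>x\<in>Xb. gfb x = (gb \<circ> fb) x))
     \<and> (\<forall>Xb' dXb'. convex_closure X dX Xb' dXb' \<longrightarrow>
          (\<exists>h. isometry Xb dXb Xb' dXb' h \<and> (\<forall>x\<in>X. h x = x)))"
  using contractive_ext_exists[OF cX cY] contractive_ext_unique[OF cX cY]
    contractive_ext_immersion_iff[OF cX cY] contractive_ext_isometry[OF cX cY]
    contractive_ext_comp_unique[OF cX cY cZ] convex_closure_isometric[OF B cX]
  by (simp add: imp_conjL)

end
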